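(* A curve $u\in C^1(\mathbb{R}/\mathbb{Z},\mathbb{R}^n)$ is injective and regular (i.e. $\min_{\mathbb{R}/\mathbb{Z}}|u'|>0$) if and only if $\mathrm{bil}(u)<\infty$. Moreover, if $\mathrm{bil}(u)<\infty$, then $\mathrm{bil}(\tilde u)\le2\,\mathrm{bil}(u)$ for every $\tilde u\in C^1(\mathbb{R}/\mathbb{Z},\mathbb{R}^n)$ with \[\|(\tilde u-u)'\|_{L^\infty}\le\frac1{2\,\mathrm{bil}(u)}.\]
   Context: $\mathrm{bil}(u)=\sup_{x,y\in\mathbb{R}/\mathbb{Z},\,x\ne y}\frac{|x-y|}{|u(x)-u(y)|}$, where $|x-y|=\min_{k\in\mathbb{Z}}|x-y-k|$ is the distance in $\mathbb{R}/\mathbb{Z}$. *)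

theory Defs
  imports "HOL-Analysis.Analysis" "HOL-Library.Extended_Real"
begin

text \<open>Curves on R/Z are represented as 1-periodic functions on the reals.\<close>

definition periodic1 :: "(real \<Rightarrow> 'a) \<Rightarrow> bool" where
  "periodic1 u \<longleftrightarrow> (\<forall>t. u (t + 1) = u t)"

definition cdist :: "real \<Rightarrow> real \<Rightarrow> real" where
  "cdist x y = (INF k\<in>(\<int>::real set). \<bar>x - y - k\<bar>)"

definition C1_closed_curve :: "(real \<Rightarrow> 'a::euclidean_space) \<Rightarrow> bool" where
  "C1_closed_curve u \<longleftrightarrow> periodic1 u \<and> (\<forall>t. u differentiable (at t))
     \<and> continuous_on UNIV (\<lambda>t. vector_derivative u (at t))"

definition bil :: "(real \<Rightarrow> 'a::real_normed_vector) \<Rightarrow> ereal" where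
  "bil u = (SUP (x, y)\<in>{(x, y). cdist x y \<noteq> 0}. (if u x = u y then \<infinity> else ereal (cdist x y / norm (u x - u y))))"

definition inj_circle :: "(real \<Rightarrow> 'a) \<Rightarrow> bool" where
  "inj_circle u \<longleftrightarrow> (\<forall>x y. u x = u y \<longrightarrow> cdist x y = 0)"

end

theory Submission
  imports Defs
begin

text \<open>If \<open>bil u = b < \<infinity>\<close>, then \<open>|x - y| \<le> b |u x - u y|\<close> on \<open>R/Z\<close>: injectivity is immediate,
  and letting \<open>y \<rightarrow> x\<close> gives \<open>|u'| \<ge> 1/b\<close>. Conversely, if \<open>u\<close> is injective with \<open>|u'| \<ge> m > 0\<close>,
  uniform continuity of \<open>u'\<close> makes \<open>u\<close> expand circle distances below some \<open>\<delta>\<close> by the factor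
  \<open>m/2\<close>, while compactness and injectivity bound \<open>|u x - u y|\<close> from below on pairs at
  circle distance \<open>\<ge> \<delta>\<close>. For the perturbation, \<open>w = \<tilde>u - u\<close> is \<open>1/(2b)\<close>-Lipschitz for the
  circle distance, so \<open>|\<tilde>u x - \<tilde>u y| \<ge> |x - y|/b - |x - y|/(2b)\<close>.\<close>

lemma cdist_eq_min_frac: "cdist x y = min (frac (x - y)) (1 - frac (x - y))"
proof (rule antisym)
  have bdd: "bdd_below ((\<lambda>k. \<bar>x - y - k\<bar>) ` \<int>)"
    by (rule bdd_belowI[of _ 0]) auto
  have "cdist x y \<le> \<bar>x - y - of_int \<lfloor>x - y\<rfloor>\<bar>"
    unfolding cdist_def by (rule cINF_lower[OF bdd]) auto
  moreover have "cdist x y \<le> \<bar>x - y - of_int (\<lfloor>x - y\<rfloor> + 1)\<bar>"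
    unfolding cdist_def by (rule cINF_lower[OF bdd]) (auto intro: Ints_of_int)
  ultimately show "cdist x y \<le> min (frac (x - y)) (1 - frac (x - y))"
    using frac_lt_1[of "x - y"] by (simp add: frac_def)
next
  show "min (frac (x - y)) (1 - frac (x - y)) \<le> cdist x y"
    unfolding cdist_def
  proof (rule cINF_greatest)
    fix k :: real assume "k \<in> \<int>"
    then obtain n where "k = of_int n" by (auto elim: Ints_cases)
    then show "min (frac (x - y)) (1 - frac (x - y)) \<le> \<bar>x - y - k\<bar>"
      unfolding frac_def by (cases "n \<le> \<lfloor>x - y\<rfloor>") linarith+
  qed auto
qed

lemma cdist_nonneg: "0 \<le> cdist x y"
  using frac_lt_1[of "x - y"] by (simp add: cdist_eq_min_frac)

lemma cdist_le_half: "cdist x y \<le> 1 / 2"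
  by (simp add: cdist_eq_min_frac min_def)

lemma cdist_eq_abs: "\<bar>x - y\<bar> \<le> 1 / 2 \<Longrightarrow> cdist x y = \<bar>x - y\<bar>"
proof (cases "0 \<le> x - y")
  case True
  moreover assume "\<bar>x - y\<bar> \<le> 1 / 2"
  ultimately have "frac (x - y) = x - y" by (simp add: frac_eq)
  then show ?thesis using True \<open>\<bar>x - y\<bar> \<le> 1 / 2\<close> by (simp add: cdist_eq_min_frac)
next
  case False
  moreover assume "\<bar>x - y\<bar> \<le> 1 / 2"
  ultimately have "\<lfloor>x - y\<rfloor> = -1" by (simp add: floor_eq_iff)
  then show ?thesis using False \<open>\<bar>x - y\<bar> \<le> 1 / 2\<close> by (simp add: cdist_eq_min_frac frac_def)
qed

lemma cdist_attained: obtains k where "k \<in> \<int>" "cdist x y = \<bar>x - y - k\<bar>"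
proof (cases "frac (x - y) \<le> 1 - frac (x - y)")
  case True
  then show ?thesis
    using that[of "of_int \<lfloor>x - y\<rfloor>"] frac_ge_0[of "x - y"] by (simp add: cdist_eq_min_frac frac_def)
next
  case False
  then show ?thesis
    using that[of "of_int (\<lfloor>x - y\<rfloor> + 1)"] frac_lt_1[of "x - y"]
    by (simp add: cdist_eq_min_frac frac_def)
qed

lemma periodic1_add_Ints:
  assumes "periodic1 u" "k \<in> \<int>"
  shows "u (t + k) = u t"
proof -
  have nat_shift: "u (s + real n) = u s" for s n
  proof (induction n)
    case (Suc n)
    have "u (s + real (Suc n)) = u ((s + real n) + 1)" by (simp add: algebra_simps)
    then show ?case using Suc assms(1) by (simp add: periodic1_def)
  qed simp
  obtain n where "k = of_int n" using assms(2) by (auto elim: Ints_cases)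
  then consider "k = real (nat n)" | "k = - real (nat (- n))" by linarith
  then show ?thesis
  proof cases
    case 2
    then show ?thesis using nat_shift[of "t + k" "nat (- n)"] by simp
  qed (simp add: nat_shift)
qed

lemma periodic1_cdist_representatives:
  assumes "periodic1 u"
  obtains a b where "a \<in> {0..<1}" "\<bar>a - b\<bar> = cdist x y" "u a = u x" "u b = u y"
proof -
  obtain k where k: "k \<in> \<int>" "cdist x y = \<bar>x - y - k\<bar>" by (rule cdist_attained)
  have "u (x - of_int \<lfloor>x\<rfloor>) = u x"
    using periodic1_add_Ints[OF assms Ints_of_int[of "- \<lfloor>x\<rfloor>"], of x] by simp
  moreover have "u (y + k - of_int \<lfloor>x\<rfloor>) = u y"
    using periodic1_add_Ints[OF assms, of "k - of_int \<lfloor>x\<rfloor>" y] k(1) by (simp add: add_diff_eq)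
  ultimately show ?thesis
    using that[of "frac x" "y + k - of_int \<lfloor>x\<rfloor>"] k(2) frac_lt_1[of x]
    by (simp add: frac_def algebra_simps)
qed

lemma C1_closed_curve_has_vector_derivative:
  "C1_closed_curve u \<Longrightarrow> (u has_vector_derivative vector_derivative u (at t)) (at t)"
  unfolding C1_closed_curve_def by (simp add: vector_derivative_works[symmetric])

lemma vector_differentiable_bound:
  fixes f :: "real \<Rightarrow> 'a::real_normed_vector"
  assumes "\<And>s. (f has_vector_derivative f' s) (at s)" "\<And>s. norm (f' s) \<le> B"
  shows "norm (f x - f y) \<le> B * \<bar>x - y\<bar>"
proof -
  have "norm (f x - f y) \<le> B * norm (x - y)"
  proof (rule differentiable_bound[where S = UNIV and f' = "\<lambda>s h. h *\<^sub>R f' s"])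
    fix s
    show "(f has_derivative (\<lambda>h. h *\<^sub>R f' s)) (at s within UNIV)"
      using assms(1) by (simp add: has_vector_derivative_def)
    have "onorm (\<lambda>h::real. h *\<^sub>R f' s) = norm (f' s)"
      using onorm_scaleR_left[OF bounded_linear_ident, of "f' s"] onorm_id[where 'a = real]
      by (simp add: id_def)
    then show "onorm (\<lambda>h. h *\<^sub>R f' s) \<le> B" using assms(2) by simp
  qed auto
  then show ?thesis by simp
qed

lemma norm_vector_derivative_ge:
  fixes u :: "real \<Rightarrow> 'a::real_normed_vector"
  assumes "(u has_vector_derivative D) (at t)"
    and "\<forall>\<^sub>F h in at 0. c * \<bar>h\<bar> \<le> norm (u (t + h) - u t)"
  shows "c \<le> norm D"
proof -
  define r where "r = (\<lambda>h. norm (u (t + h) - u t - h *\<^sub>R D) / \<bar>h\<bar>)"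
  have "(r \<longlongrightarrow> 0) (at 0)"
    using assms(1) by (simp add: has_vector_derivative_def has_derivative_at r_def)
  then have "((\<lambda>h. r h + norm D) \<longlongrightarrow> 0 + norm D) (at 0)"
    by (intro tendsto_add tendsto_const)
  moreover have "\<forall>\<^sub>F h in at 0. c \<le> r h + norm D"
    using assms(2) unfolding eventually_at_filter
  proof eventually_elim
    case (elim h)
    show ?case
    proof (intro impI)
      assume "h \<noteq> 0"
      then have "c * \<bar>h\<bar> \<le> norm (u (t + h) - u t - h *\<^sub>R D) + \<bar>h\<bar> * norm D"
        using elim norm_triangle_ineq[of "u (t + h) - u t - h *\<^sub>R D" "h *\<^sub>R D"] by simp
      with \<open>h \<noteq> 0\<close> show "c \<le> r h + norm D" by (simp add: r_def field_simps)
    qed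
  qed
  ultimately have "c \<le> 0 + norm D" by (rule tendsto_lowerbound) simp
  then show ?thesis by simp
qed

lemma periodic1_lipschitz_cdist:
  fixes w :: "real \<Rightarrow> 'a::real_normed_vector"
  assumes "periodic1 w" "\<And>t. (w has_vector_derivative w' t) (at t)" "\<And>t. norm (w' t) \<le> B"
  shows "norm (w x - w y) \<le> B * cdist x y"
proof -
  obtain a b where "\<bar>a - b\<bar> = cdist x y" "w a = w x" "w b = w y"
    by (rule periodic1_cdist_representatives[OF assms(1)])
  then show ?thesis using vector_differentiable_bound[OF assms(2,3), of a b] by simp
qed

lemma bil_le_ereal_iff:
  "bil u \<le> ereal C \<longleftrightarrow> (\<forall>x y. cdist x y \<noteq> 0 \<longrightarrow> u x \<noteq> u y \<and> cdist x y \<le> C * norm (u x - u y))"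
  by (auto simp: bil_def SUP_le_iff divide_le_eq mult.commute)

lemma bil_pos: "0 < bil u"
proof -
  have half: "cdist (1 / 2) 0 = 1 / 2" by (simp add: cdist_eq_abs)
  then have "0 < (if u (1 / 2) = u 0 then \<infinity> else ereal (cdist (1 / 2) 0 / norm (u (1 / 2) - u 0)))"
    by simp
  also have "\<dots> \<le> bil u"
    unfolding bil_def by (rule SUP_upper2[of "(1 / 2, 0)"]) (use half in auto)
  finally show ?thesis .
qed

lemma bil_finite:
  assumes "bil u < \<infinity>"
  obtains b where "bil u = ereal b" "0 < b"
  using assms bil_pos[of u] by (cases "bil u") auto

lemma cdist_le_bil_mult_norm:
  assumes "bil u = ereal b" "cdist x y \<noteq> 0"
  shows "u x \<noteq> u y" "cdist x y \<le> b * norm (u x - u y)"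
  using assms bil_le_ereal_iff[of u b] by auto

lemma inj_circle_if_bil_finite: "bil u < \<infinity> \<Longrightarrow> inj_circle u"
  by (metis bil_finite cdist_le_bil_mult_norm(1) inj_circle_def)

lemma norm_vector_derivative_ge_if_bil_eq:
  fixes u :: "real \<Rightarrow> 'a::real_normed_vector"
  assumes "bil u = ereal b" "(u has_vector_derivative D) (at t)"
  shows "1 / b \<le> norm D"
proof (rule norm_vector_derivative_ge[OF assms(2)])
  have "0 < b" using bil_pos[of u] assms(1) by simp
  have "1 / b * \<bar>h\<bar> \<le> norm (u (t + h) - u t)" if "h \<noteq> 0" "\<bar>h\<bar> < 1 / 2" for h
  proof -
    have "cdist (t + h) t = \<bar>h\<bar>" using that by (simp add: cdist_eq_abs)
    then have "\<bar>h\<bar> \<le> b * norm (u (t + h) - u t)"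
      using cdist_le_bil_mult_norm[OF assms(1), of "t + h" t] that(1) by simp
    then show ?thesis using \<open>0 < b\<close> by (simp add: field_simps)
  qed
  then show "\<forall>\<^sub>F h in at 0. 1 / b * \<bar>h\<bar> \<le> norm (u (t + h) - u t)"
    unfolding eventually_at by (intro exI[of _ "1 / 2"]) auto
qed

lemma C1_closed_curve_locally_expanding:
  fixes u :: "real \<Rightarrow> 'a::euclidean_space"
  assumes u: "C1_closed_curve u" and m: "0 < m" "\<And>t. m \<le> norm (vector_derivative u (at t))"
  obtains \<delta> where "0 < \<delta>" "\<And>x y. cdist x y \<le> \<delta> \<Longrightarrow> m / 2 * cdist x y \<le> norm (u x - u y)"
proof -
  define u' where "u' t = vector_derivative u (at t)" for t
  \<comment> \<open>the lifts \<open>a \<in> [0, 1)\<close>, \<open>|a - b| \<le> 1/2\<close> used below stay in \<open>[-1, 2]\<close>\<close>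
  have "uniformly_continuous_on {-1..2} u'"
    using u unfolding C1_closed_curve_def u'_def
    by (intro compact_uniformly_continuous) (auto intro: continuous_on_subset)
  then obtain d where "0 < d"
    and d: "\<And>s s'. s \<in> {-1..2} \<Longrightarrow> s' \<in> {-1..2} \<Longrightarrow> dist s s' < d \<Longrightarrow> dist (u' s) (u' s') < m / 2"
    unfolding uniformly_continuous_on_def using m(1) by (meson half_gt_zero)
  have per: "periodic1 u" using u by (simp add: C1_closed_curve_def)
  define \<delta> where "\<delta> = min (d / 2) (1 / 2)"
  have "m / 2 * cdist x y \<le> norm (u x - u y)" if "cdist x y \<le> \<delta>" for x y
  proof -
    obtain a b where ab: "a \<in> {0..<1}" "\<bar>a - b\<bar> = cdist x y" "u a = u x" "u b = u y"
      by (rule periodic1_cdist_representatives[OF per])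
    have "\<bar>a - b\<bar> \<le> \<delta>" using ab that by simp
    then have seg: "closed_segment a b \<subseteq> {-1..2}" "\<And>s. s \<in> closed_segment a b \<Longrightarrow> \<bar>s - a\<bar> \<le> \<bar>a - b\<bar>"
      using ab(1) by (auto simp: closed_segment_eq_real_ivl \<delta>_def split: if_split_asm)
    have "norm (u b - u a - (b - a) *\<^sub>R u' a) \<le> norm (b - a) * (m / 2)"
    proof (rule vector_differentiable_bound_linearization[of "closed_segment a b" u u' a b a])
      fix s assume s: "s \<in> closed_segment a b"
      show "(u has_vector_derivative u' s) (at s within closed_segment a b)"
        unfolding u'_def by (rule has_vector_derivative_at_within[OF C1_closed_curve_has_vector_derivative[OF u]])
      have "dist s a < d" using seg(2)[OF s] \<open>\<bar>a - b\<bar> \<le> \<delta>\<close> \<open>0 < d\<close> by (simp add: \<delta>_def dist_real_def)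
      then show "norm (u' s - u' a) \<le> m / 2"
        using d[of s a] seg(1) s ab(1) by (auto simp: dist_norm)
    qed auto
    moreover have "\<bar>b - a\<bar> * m \<le> norm ((b - a) *\<^sub>R u' a)"
      using m(2)[of a] by (simp add: u'_def mult_left_mono)
    moreover have "norm ((b - a) *\<^sub>R u' a) \<le> norm (u b - u a) + norm (u b - u a - (b - a) *\<^sub>R u' a)"
      using norm_triangle_sub[of "(b - a) *\<^sub>R u' a" "u b - u a"] by (simp add: norm_minus_commute)
    ultimately have "m / 2 * \<bar>b - a\<bar> \<le> norm (u b - u a)"
      unfolding real_norm_def by (simp add: field_simps)
    then show ?thesis using ab by (simp add: abs_minus_commute norm_minus_commute)
  qed
  moreover have "0 < \<delta>" using \<open>0 < d\<close> by (simp add: \<delta>_def)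
  ultimately show thesis using that by blast
qed

lemma inj_circle_separated:
  fixes u :: "real \<Rightarrow> 'a::real_normed_vector"
  assumes per: "periodic1 u" and cont: "continuous_on UNIV u" and inj: "inj_circle u" and "0 < \<delta>"
  obtains \<mu> where "0 < \<mu>" "\<And>x y. \<delta> \<le> cdist x y \<Longrightarrow> \<mu> \<le> norm (u x - u y)"
proof (cases "\<delta> \<le> 1 / 2")
  case False
  then show ?thesis using that[of 1] cdist_le_half by (meson order_trans not_le zero_less_one)
next
  case True
  \<comment> \<open>\<open>(a, h)\<close> encodes the lifts \<open>a\<close>, \<open>a + h\<close>, at circle distance \<open>|h|\<close>\<close>
  define K where "K = {0..1::real} \<times> ({-1 / 2..-\<delta>} \<union> {\<delta>..1 / 2})"
  define f where "f p = norm (u (fst p) - u (fst p + snd p))" for p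
  have "compact K" unfolding K_def by (intro compact_Times compact_Un compact_Icc)
  moreover have "K \<noteq> {}" using True by (auto simp: K_def)
  moreover have "continuous_on K f"
    unfolding f_def by (intro continuous_intros continuous_on_compose2[OF cont]) auto
  ultimately obtain p0 where "p0 \<in> K" and min: "\<And>p. p \<in> K \<Longrightarrow> f p0 \<le> f p"
    using continuous_attains_inf by metis
  have "0 < f p0"
  proof -
    obtain a h where "p0 = (a, h)" and h: "h \<in> {-1 / 2..-\<delta>} \<union> {\<delta>..1 / 2}"
      using \<open>p0 \<in> K\<close> by (auto simp: K_def)
    moreover from h have "\<delta> \<le> \<bar>h\<bar>" "\<bar>h\<bar> \<le> 1 / 2" using \<open>0 < \<delta>\<close> by auto
    moreover have "cdist a (a + h) = \<bar>h\<bar>" using calculation by (simp add: cdist_eq_abs)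
    ultimately show ?thesis using inj \<open>0 < \<delta>\<close> by (auto simp: f_def inj_circle_def)
  qed
  moreover have "f p0 \<le> norm (u x - u y)" if "\<delta> \<le> cdist x y" for x y
  proof -
    obtain a b where ab: "a \<in> {0..<1}" "\<bar>a - b\<bar> = cdist x y" "u a = u x" "u b = u y"
      by (rule periodic1_cdist_representatives[OF per])
    then have "(a, b - a) \<in> K" using that cdist_le_half[of x y] by (auto simp: K_def)
    then have "f p0 \<le> f (a, b - a)" by (rule min)
    then show ?thesis using ab by (simp add: f_def)
  qed
  ultimately show ?thesis using that by blast
qed

lemma bil_finite_if_inj_regular:
  fixes u :: "real \<Rightarrow> 'a::euclidean_space"
  assumes u: "C1_closed_curve u" and inj: "inj_circle u"
    and regular: "0 < (INF t. norm (vector_derivative u (at t)))"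
  shows "bil u < \<infinity>"
proof -
  define m where "m = (INF t. norm (vector_derivative u (at t)))"
  have "m \<le> norm (vector_derivative u (at t))" for t
    unfolding m_def by (rule cINF_lower) (auto intro: bdd_belowI[of _ 0])
  then obtain \<delta> where "0 < \<delta>" and near: "\<And>x y. cdist x y \<le> \<delta> \<Longrightarrow> m / 2 * cdist x y \<le> norm (u x - u y)"
    using C1_closed_curve_locally_expanding[OF u] regular m_def by metis
  have "periodic1 u" "continuous_on UNIV u"
    using u unfolding C1_closed_curve_def
    by (auto intro!: continuous_at_imp_continuous_on differentiable_imp_continuous_within)
  then obtain \<mu> where "0 < \<mu>" and far: "\<And>x y. \<delta> \<le> cdist x y \<Longrightarrow> \<mu> \<le> norm (u x - u y)"
    using inj_circle_separated inj \<open>0 < \<delta>\<close> by metis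
  define C where "C = max (2 / m) (1 / (2 * \<mu>))"
  have "cdist x y \<le> C * norm (u x - u y)" for x y
  proof (cases "cdist x y \<le> \<delta>")
    case True
    then have "cdist x y \<le> 2 / m * norm (u x - u y)"
      using near[of x y] regular by (simp add: m_def field_simps)
    also have "\<dots> \<le> C * norm (u x - u y)" by (intro mult_right_mono) (auto simp: C_def)
    finally show ?thesis .
  next
    case False
    have "2 * cdist x y * \<mu> \<le> 1 * \<mu>"
      using cdist_le_half[of x y] \<open>0 < \<mu>\<close> by (intro mult_right_mono) auto
    then have "2 * cdist x y * \<mu> \<le> norm (u x - u y)" using far[of x y] False by linarith
    then have "cdist x y \<le> 1 / (2 * \<mu>) * norm (u x - u y)"
      using \<open>0 < \<mu>\<close> by (simp add: field_simps)
    also have "\<dots> \<le> C * norm (u x - u y)" by (intro mult_right_mono) (auto simp: C_def)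
    finally show ?thesis .
  qed
  then have "bil u \<le> ereal C" using inj unfolding bil_le_ereal_iff inj_circle_def by blast
  then show ?thesis using order.strict_trans1 by fastforce
qed

lemma bil_perturbation:
  fixes u v :: "real \<Rightarrow> 'a::euclidean_space"
  assumes u: "C1_closed_curve u" and v: "C1_closed_curve v" and b: "bil u = ereal b"
    and close: "\<And>t. norm (vector_derivative (\<lambda>s. v s - u s) (at t)) \<le> 1 / (2 * b)"
  shows "bil v \<le> ereal (2 * b)"
proof -
  have "0 < b" using bil_pos[of u] b by simp
  define w where "w = (\<lambda>s. v s - u s)"
  have per: "periodic1 w" using u v by (simp add: w_def C1_closed_curve_def periodic1_def)
  have "w differentiable (at t)" for t
    using u v unfolding w_def C1_closed_curve_def by (simp add: differentiable_diff)
  then have der: "(w has_vector_derivative vector_derivative w (at t)) (at t)" for t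
    by (rule vector_derivative_works[THEN iffD1])
  have "norm (vector_derivative w (at t)) \<le> 1 / (2 * b)" for t
    using close by (simp add: w_def)
  then have lip: "norm (w x - w y) \<le> 1 / (2 * b) * cdist x y" for x y
    by (rule periodic1_lipschitz_cdist[OF per der])
  have "v x \<noteq> v y \<and> cdist x y \<le> 2 * b * norm (v x - v y)" if "cdist x y \<noteq> 0" for x y
  proof -
    have "cdist x y / b - cdist x y / (2 * b) \<le> norm (u x - u y) - norm (w x - w y)"
      using cdist_le_bil_mult_norm(2)[OF b that] lip[of x y] \<open>0 < b\<close> by (simp add: field_simps)
    also have "\<dots> \<le> norm ((u x - u y) + (w x - w y))" by (rule norm_diff_ineq)
    also have "(u x - u y) + (w x - w y) = v x - v y" by (simp add: w_def)
    finally have "cdist x y / (2 * b) \<le> norm (v x - v y)" by (simp add: field_simps)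
    moreover have "0 < cdist x y" using that cdist_nonneg[of x y] by simp
    ultimately show ?thesis using \<open>0 < b\<close> by (auto simp: field_simps)
  qed
  then show ?thesis by (simp add: bil_le_ereal_iff)
qed

theorem lemma3p6:
  fixes u :: "real \<Rightarrow> 'n::euclidean_space"
  assumes "C1_closed_curve u"
  shows "((inj_circle u \<and> (INF t. norm (vector_derivative u (at t))) > 0) \<longleftrightarrow> bil u < \<infinity>)
    \<and> (bil u < \<infinity> \<longrightarrow>
         (\<forall>v :: real \<Rightarrow> 'n. C1_closed_curve v
           \<and> (SUP t. ereal (norm (vector_derivative (\<lambda>s. v s - u s) (at t))))
                 \<le> ereal (1 / (2 * real_of_ereal (bil u)))
           \<longrightarrow> bil v \<le> 2 * bil u))"
proof -
  have "inj_circle u \<and> (INF t. norm (vector_derivative u (at t))) > 0" if fin: "bil u < \<infinity>"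
  proof -
    obtain b where b: "bil u = ereal b" "0 < b" using bil_finite[OF fin] .
    have "1 / b \<le> norm (vector_derivative u (at t))" for t
      by (rule norm_vector_derivative_ge_if_bil_eq[OF b(1) C1_closed_curve_has_vector_derivative[OF assms]])
    then have "1 / b \<le> (INF t. norm (vector_derivative u (at t)))" by (intro cINF_greatest) auto
    moreover have "0 < 1 / b" using b(2) by simp
    ultimately show ?thesis using inj_circle_if_bil_finite[OF fin] by (meson less_le_trans)
  qed
  moreover have "bil v \<le> 2 * bil u"
    if fin: "bil u < \<infinity>" and v: "C1_closed_curve v"
      and close: "(SUP t. ereal (norm (vector_derivative (\<lambda>s. v s - u s) (at t))))
                 \<le> ereal (1 / (2 * real_of_ereal (bil u)))" for v
  proof -
    obtain b where b: "bil u = ereal b" using bil_finite[OF fin] .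
    have "norm (vector_derivative (\<lambda>s. v s - u s) (at t)) \<le> 1 / (2 * b)" for t
      using order_trans[OF SUP_upper close] b by simp
    then show ?thesis using bil_perturbation[OF assms v b] b by simp
  qed
  ultimately show ?thesis using bil_finite_if_inj_regular[OF assms] by blast
qed

end
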